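(* Let $A>0$, $\sigma>0$ and integer $K\ge2$. Then $$\mathsf{F}(A,K,\sigma)\ \ge\ R_{\rm OWB}(A,K,\sigma):=\log K-\tfrac12\log\Bigl(\tfrac{2\pi e}{12}\Bigr)-\tfrac12\log\Bigl(1+\tfrac{12(K-1)^2\sigma^2}{A^2}\Bigr).$$
   Context: All logarithms are base 2. $\mathsf{F}(A,K,\sigma)=\max\{\mathsf{F}_1,\mathsf{F}_2,\mathsf{F}_3\}(A,K,\sigma)$ with $\mathsf{F}_1(A,K,\sigma)=\log K-H(\xi_{A,K})-\xi_{A,K}\log(K-1)$, $\xi_{A,K}=\frac{2(K-1)}{K}\mathsf{Q}(\frac{A}{2(K-1)\sigma})$; $\mathsf{F}_2(A,K,\sigma)=\underline{C}(\frac{KA}{K-1},\sigma)-\mathsf{E}(\frac{A}{K-1},\sigma)$; $\mathsf{F}_3(A,K,\sigma)=-\log\bigl(\sum_{i,j=1}^K\frac{\sqrt{e/2}}{K^2}e^{-\frac{(i-j)^2A^2}{4(K-1)^2\sigma^2}}\bigr)$. Here $H(p)$ is the binary entropy function, $\mathsf{Q}$ the standard Gaussian tail function, and for $a>0$: $\underline{C}(a,\sigma)=\frac12\log(1+\frac{a^2}{2\pi e\sigma^2})$, $\overline{C}(a,\sigma)=\min\{\frac12\log(1+\frac{a^2}{4\sigma^2}),\log(1+\frac{a}{\sqrt{2\pi e}\sigma})\}$, $\mathsf{E}(a,\sigma)=\min\{\overline{C}(a,\sigma),\frac12\log(1+\frac{a^2}{12\sigma^2})\}$. *)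

theory Defs
  imports "HOL-Probability.Probability"
begin

definition gaussQ :: "real \<Rightarrow> real" where
  "gaussQ x = (LINT t:{x<..}|lborel. std_normal_density t)"

definition binH :: "real \<Rightarrow> real" where
  "binH p = (if p \<le> 0 \<or> p \<ge> 1 then 0 else - p * log 2 p - (1 - p) * log 2 (1 - p))"

definition xiAK :: "real \<Rightarrow> nat \<Rightarrow> real \<Rightarrow> real" where
  "xiAK A K \<sigma> = 2 * (real K - 1) / real K * gaussQ (A / (2 * (real K - 1) * \<sigma>))"

definition F1 :: "real \<Rightarrow> nat \<Rightarrow> real \<Rightarrow> real" where
  "F1 A K \<sigma> = log 2 (real K) - binH (xiAK A K \<sigma>) - xiAK A K \<sigma> * log 2 (real K - 1)"

definition Clow :: "real \<Rightarrow> real \<Rightarrow> real" where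
  "Clow a \<sigma> = 1/2 * log 2 (1 + a^2 / (2 * pi * exp 1 * \<sigma>^2))"

definition Cup :: "real \<Rightarrow> real \<Rightarrow> real" where
  "Cup a \<sigma> = min (1/2 * log 2 (1 + a^2 / (4 * \<sigma>^2)))
                  (log 2 (1 + a / (sqrt (2 * pi * exp 1) * \<sigma>)))"

definition Efun :: "real \<Rightarrow> real \<Rightarrow> real" where
  "Efun a \<sigma> = min (Cup a \<sigma>) (1/2 * log 2 (1 + a^2 / (12 * \<sigma>^2)))"

definition F2 :: "real \<Rightarrow> nat \<Rightarrow> real \<Rightarrow> real" where
  "F2 A K \<sigma> = Clow (real K * A / (real K - 1)) \<sigma> - Efun (A / (real K - 1)) \<sigma>"

definition F3 :: "real \<Rightarrow> nat \<Rightarrow> real \<Rightarrow> real" where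
  "F3 A K \<sigma> = - log 2 (\<Sum>i\<in>{1..K}. \<Sum>j\<in>{1..K}.
      sqrt (exp 1 / 2) / (real K)^2 *
      exp (- ((real i - real j)^2 * A^2) / (4 * (real K - 1)^2 * \<sigma>^2)))"

definition Ffun :: "real \<Rightarrow> nat \<Rightarrow> real \<Rightarrow> real" where
  "Ffun A K \<sigma> = max (F1 A K \<sigma>) (max (F2 A K \<sigma>) (F3 A K \<sigma>))"

definition R_OWB :: "real \<Rightarrow> nat \<Rightarrow> real \<Rightarrow> real" where
  "R_OWB A K \<sigma> = log 2 (real K) - 1/2 * log 2 (2 * pi * exp 1 / 12)
     - 1/2 * log 2 (1 + 12 * (real K - 1)^2 * \<sigma>^2 / A^2)"

end

theory Submission
  imports Defs
begin

text \<open>With \<open>a = A/(K-1)\<close>, \<open>R_OWB\<close> equals the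
high-SNR form \<open>1/2 log (K\<^sup>2 a\<^sup>2 / (2\<pi>e \<sigma>\<^sup>2))\<close> of \<open>Clow (K a)\<close> minus the uniform-input
term \<open>1/2 log (1 + a\<^sup>2 / (12 \<sigma>\<^sup>2))\<close> bounding \<open>Efun a\<close>; adding \<open>1\<close> inside the first
logarithm only increases it.\<close>

lemma Efun_le_uniform_bound: "Efun a \<sigma> \<le> 1/2 * log 2 (1 + a^2 / (12 * \<sigma>^2))"
  unfolding Efun_def by simp

lemma Clow_ge_high_snr:
  assumes "a \<noteq> 0" and "\<sigma> \<noteq> 0"
  shows "1/2 * log 2 (a^2 / (2 * pi * exp 1 * \<sigma>^2)) \<le> Clow a \<sigma>"
proof -
  have "a^2 / (2 * pi * exp 1 * \<sigma>^2) > 0" using assms by simp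
  then show ?thesis unfolding Clow_def by simp
qed

lemma R_OWB_eq_high_snr_gap:
  fixes A \<sigma> :: real and K :: nat
  assumes "A > 0" and "\<sigma> > 0" and "K \<ge> 2"
  defines "a \<equiv> A / (real K - 1)"
  shows "R_OWB A K \<sigma> = 1/2 * log 2 ((real K * a)^2 / (2 * pi * exp 1 * \<sigma>^2))
                         - 1/2 * log 2 (1 + a^2 / (12 * \<sigma>^2))"
proof -
  define c where "c = 2 * pi * exp 1 / 12"
  define v where "v = a^2 / (12 * \<sigma>^2)"
  have K1: "real K - 1 > 0" and K0: "real K > 0" using assms(3) by auto
  have a0: "a > 0" using assms(1) K1 by (simp add: a_def)
  have c0: "c > 0" by (simp add: c_def)
  have v0: "v > 0" using a0 assms(2) by (simp add: v_def)
  have "1 + 12 * (real K - 1)^2 * \<sigma>^2 / A^2 = (1 + v) / v"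
    using K1 assms(1,2) v0 by (simp add: v_def a_def field_simps)
  then have "R_OWB A K \<sigma> = 1/2 * log 2 ((real K)^2) - 1/2 * log 2 c - 1/2 * log 2 ((1 + v) / v)"
    using K0 by (simp add: R_OWB_def c_def log_nat_power)
  also have "\<dots> = 1/2 * log 2 ((real K)^2 * v / c) - 1/2 * log 2 (1 + v)"
    using v0 K0 c0 by (simp add: log_mult log_divide algebra_simps)
  also have "(real K)^2 * v / c = (real K * a)^2 / (2 * pi * exp 1 * \<sigma>^2)"
    by (simp add: v_def c_def field_simps power_mult_distrib)
  finally show ?thesis by (simp add: v_def)
qed

theorem mainTheorem3:
  fixes A \<sigma> :: real and K :: nat
  assumes "A > 0" and "\<sigma> > 0" and "K \<ge> 2"
  shows "Ffun A K \<sigma> \<ge> R_OWB A K \<sigma>"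
proof -
  define a where "a = A / (real K - 1)"
  have "real K * a \<noteq> 0" using assms by (simp add: a_def)
  then have "R_OWB A K \<sigma> \<le> Clow (real K * a) \<sigma> - Efun a \<sigma>"
    using R_OWB_eq_high_snr_gap[OF assms] Clow_ge_high_snr[of "real K * a" \<sigma>]
      Efun_le_uniform_bound[of a \<sigma>] assms(2) by (simp add: a_def)
  also have "\<dots> = F2 A K \<sigma>" by (simp add: F2_def a_def)
  also have "\<dots> \<le> Ffun A K \<sigma>" by (simp add: Ffun_def)
  finally show ?thesis .
qed

end
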